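(* Let $d$ be a prime, $n,N\in\mathbb{N}$, $\omega\in\mathbb{C}$ a primitive $d$-th root of unity, $\zeta(m)=\omega^m$, $A\le\mathbb{C}^\times$ with $\omega\in A$ (and containing a square root of $\omega$ if $d=2$), and $W_1,W_2\in M_n(\mathbb{Z}_d)$ with $W_i-W_i^T$ of full rank. For $i=1,2$ let $\mu_i:\mathcal{G}_d^n(A,\zeta,W_i)\to GL(\mathbb{C}^N)$, $\mu_i(a,p,x)=a\,\omega^p\tau_i(x)$, be injective group homomorphisms, let $\phi:\mathcal{G}_d^n(A,\zeta,W_1)\to\mathcal{G}_d^n(A,\zeta,W_2)$ be a group isomorphism, and suppose $S\in GL(\mathbb{C}^N)$ satisfies $\mu_2(\phi(g))=S\mu_1(g)S^{-1}$ for all $g$. If there is a set $B\subseteq\mathcal{G}_d^n(A,\zeta,W_1)$ such that $\mu_1(B)$ consists of Hermitian matrices spanning $M_N(\mathbb{C})$ and $\mu_2(\phi(g))$ is Hermitian for all $g\in B$, then there is $c\in\mathbb{C}\setminus\{0\}$ such that $cS$ is unitary. The same conclusion holds if "Hermitian" is replaced by "unitary" in both places.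
   Context: Let $F\subseteq A$ be a fixed set of representatives of $A/\zeta(\mathbb{Z}_d)$ with $1\in F$, and $r:A\to F$, $u:A\to\mathbb{Z}_d$ the maps with $a=r(a)\omega^{u(a)}$. For $W\in M_n(\mathbb{Z}_d)$, $\mathcal{G}_d^n(A,\zeta,W)$ is the set $F\times\mathbb{Z}_d\times\mathbb{Z}_d^n$ with multiplication $(a,p,x)\cdot(b,q,y)=(r(ab),\,u(ab)+p+q+x^TWy,\,x+y)$. *)

theory Defs
  imports "HOL-Algebra.Group" "Jordan_Normal_Form.Matrix"
begin

text \<open>Z_d is represented by the integers {0..<d} with arithmetic mod d;
  Z_d^n by functions nat => int with entries in {0..<d} at indices < n and
  0 at indices >= n.\<close>

definition zvecs :: "nat \<Rightarrow> nat \<Rightarrow> (nat \<Rightarrow> int) set" where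
  "zvecs d n = {x. (\<forall>i<n. 0 \<le> x i \<and> x i < int d) \<and> (\<forall>i\<ge>n. x i = 0)}"

definition zmats :: "nat \<Rightarrow> nat \<Rightarrow> (nat \<Rightarrow> nat \<Rightarrow> int) set" where
  "zmats d n = {W. \<forall>i<n. \<forall>j<n. 0 \<le> W i j \<and> W i j < int d}"

definition bil :: "nat \<Rightarrow> nat \<Rightarrow> (nat \<Rightarrow> nat \<Rightarrow> int) \<Rightarrow> (nat \<Rightarrow> int) \<Rightarrow> (nat \<Rightarrow> int) \<Rightarrow> int" where
  "bil d n W x y = (\<Sum>i<n. \<Sum>j<n. x i * W i j * y j) mod int d"

text \<open>W - W^T has full rank n over the field Z_d (d prime): its kernel is trivial.\<close>
definition skew_full_rank :: "nat \<Rightarrow> nat \<Rightarrow> (nat \<Rightarrow> nat \<Rightarrow> int) \<Rightarrow> bool" where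
  "skew_full_rank d n W \<longleftrightarrow>
     (\<forall>x\<in>zvecs d n. (\<forall>i<n. (\<Sum>j<n. (W i j - W j i) * x j) mod int d = 0) \<longrightarrow> x = (\<lambda>_. 0))"

text \<open>F is a set of representatives of A/\<langle>\<omega>\<rangle> containing 1.\<close>
definition is_rep_set :: "nat \<Rightarrow> complex \<Rightarrow> complex set \<Rightarrow> complex set \<Rightarrow> bool" where
  "is_rep_set d \<omega> A F \<longleftrightarrow> F \<subseteq> A \<and> 1 \<in> F \<and>
     (\<forall>a\<in>A. \<exists>!(f, m). f \<in> F \<and> m \<in> {0..<int d} \<and> a = f * \<omega> powi m)"

definition rep_r :: "nat \<Rightarrow> complex \<Rightarrow> complex set \<Rightarrow> complex \<Rightarrow> complex" where
  "rep_r d \<omega> F a = fst (THE (f, m). f \<in> F \<and> m \<in> {0..<int d} \<and> a = f * \<omega> powi m)"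

definition rep_u :: "nat \<Rightarrow> complex \<Rightarrow> complex set \<Rightarrow> complex \<Rightarrow> int" where
  "rep_u d \<omega> F a = snd (THE (f, m). f \<in> F \<and> m \<in> {0..<int d} \<and> a = f * \<omega> powi m)"

type_synonym gelem = "complex \<times> int \<times> (nat \<Rightarrow> int)"

definition Ggrp :: "nat \<Rightarrow> nat \<Rightarrow> complex \<Rightarrow> complex set \<Rightarrow> (nat \<Rightarrow> nat \<Rightarrow> int) \<Rightarrow> gelem monoid" where
  "Ggrp d n \<omega> F W = \<lparr> carrier = F \<times> {0..<int d} \<times> zvecs d n,
     mult = (\<lambda>(a, p, x) (b, q, y).
        (rep_r d \<omega> F (a * b),
         (rep_u d \<omega> F (a * b) + p + q + bil d n W x y) mod int d,
         (\<lambda>i. (x i + y i) mod int d))),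
     one = (1, 0, (\<lambda>_. 0)) \<rparr>"

definition adj :: "complex mat \<Rightarrow> complex mat" where
  "adj M = mat (dim_col M) (dim_row M) (\<lambda>(i, j). cnj (M $$ (j, i)))"

definition hermitian :: "complex mat \<Rightarrow> bool" where
  "hermitian M \<longleftrightarrow> dim_row M = dim_col M \<and> adj M = M"

definition unitary :: "complex mat \<Rightarrow> bool" where
  "unitary M \<longleftrightarrow> M \<in> carrier_mat (dim_row M) (dim_row M) \<and>
     M * adj M = 1\<^sub>m (dim_row M) \<and> adj M * M = 1\<^sub>m (dim_row M)"

definition mat_span :: "nat \<Rightarrow> complex mat set \<Rightarrow> complex mat set" where
  "mat_span N S = {M. \<exists>T c. finite T \<and> T \<subseteq> S \<and>
      M = mat N N (\<lambda>(i, j). \<Sum>X\<in>T. c X * X $$ (i, j))}"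

definition GL_rep :: "nat \<Rightarrow> 'g monoid \<Rightarrow> ('g \<Rightarrow> complex mat) \<Rightarrow> bool" where
  "GL_rep N G \<mu> \<longleftrightarrow>
     (\<forall>g\<in>carrier G. \<mu> g \<in> carrier_mat N N \<and> invertible_mat (\<mu> g)) \<and>
     (\<forall>g\<in>carrier G. \<forall>h\<in>carrier G. \<mu> (g \<otimes>\<^bsub>G\<^esub> h) = \<mu> g * \<mu> h)"

end

theory Submission
  imports Defs
begin

(* Under either hypothesis, (S M S^-1)^* = S M^* S^-1 for every M in the spanning set
   (in the unitary case because the adjoint of a unitary matrix is its inverse). This says
   that S^* S commutes with M^*, hence, S^* S being Hermitian, with M. So S^* S commutes with
   all of M_N(C) and equals kappa I, where kappa = |S e_0|^2 > 0 as S is invertible; then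
   kappa^(-1/2) S is unitary. *)

lemma adj_carrier_mat [simp]: "A \<in> carrier_mat n m \<Longrightarrow> adj A \<in> carrier_mat m n"
  by (auto simp: adj_def)

lemma adj_dims [simp]: "dim_row (adj A) = dim_col A" "dim_col (adj A) = dim_row A"
  by (auto simp: adj_def)

lemma index_adj [simp]: "i < dim_col A \<Longrightarrow> j < dim_row A \<Longrightarrow> adj A $$ (i, j) = cnj (A $$ (j, i))"
  by (auto simp: adj_def)

lemma adj_adj [simp]: "adj (adj A) = A"
  by (intro eq_matI) auto

lemma adj_one [simp]: "adj (1\<^sub>m n) = 1\<^sub>m n"
  by (intro eq_matI) auto

lemma adj_smult: "adj (c \<cdot>\<^sub>m A) = cnj c \<cdot>\<^sub>m adj A"
  by (intro eq_matI) auto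

lemma smult_smult_mat: "a \<cdot>\<^sub>m (b \<cdot>\<^sub>m A) = (a * b :: 'a :: semigroup_mult) \<cdot>\<^sub>m A"
  by (intro eq_matI) (auto simp: mult.assoc)

lemma one_smult_mat [simp]: "(1 :: 'a :: monoid_mult) \<cdot>\<^sub>m A = A"
  by (intro eq_matI) auto

lemma adj_mult: "A \<in> carrier_mat n k \<Longrightarrow> B \<in> carrier_mat k m \<Longrightarrow> adj (A * B) = adj B * adj A"
  by (intro eq_matI) (auto simp: scalar_prod_def mult.commute)

lemma index_mult_lincomb_left:
  fixes P :: "'a :: comm_ring_1 mat"
  assumes P: "P \<in> carrier_mat N N" and T: "T \<subseteq> carrier_mat N N" and ij: "i < N" "j < N"
  shows "(P * mat N N (\<lambda>(i, j). \<Sum>X\<in>T. c X * X $$ (i, j))) $$ (i, j) = (\<Sum>X\<in>T. c X * (P * X) $$ (i, j))"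
proof -
  have "(P * mat N N (\<lambda>(i, j). \<Sum>X\<in>T. c X * X $$ (i, j))) $$ (i, j)
      = (\<Sum>k<N. P $$ (i, k) * (\<Sum>X\<in>T. c X * X $$ (k, j)))"
    using P ij by (simp add: scalar_prod_def lessThan_atLeast0)
  also have "\<dots> = (\<Sum>X\<in>T. c X * (\<Sum>k<N. P $$ (i, k) * X $$ (k, j)))"
    by (simp add: sum_distrib_left mult_ac sum.swap[of _ T])
  also have "\<dots> = (\<Sum>X\<in>T. c X * (P * X) $$ (i, j))"
    using P T ij by (intro sum.cong) (auto simp: scalar_prod_def lessThan_atLeast0)
  finally show ?thesis .
qed

lemma index_mult_lincomb_right:
  fixes P :: "'a :: comm_ring_1 mat"
  assumes P: "P \<in> carrier_mat N N" and T: "T \<subseteq> carrier_mat N N" and ij: "i < N" "j < N"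
  shows "(mat N N (\<lambda>(i, j). \<Sum>X\<in>T. c X * X $$ (i, j)) * P) $$ (i, j) = (\<Sum>X\<in>T. c X * (X * P) $$ (i, j))"
proof -
  have "(mat N N (\<lambda>(i, j). \<Sum>X\<in>T. c X * X $$ (i, j)) * P) $$ (i, j)
      = (\<Sum>k<N. (\<Sum>X\<in>T. c X * X $$ (i, k)) * P $$ (k, j))"
    using P ij by (simp add: scalar_prod_def lessThan_atLeast0)
  also have "\<dots> = (\<Sum>X\<in>T. c X * (\<Sum>k<N. X $$ (i, k) * P $$ (k, j)))"
    by (simp add: sum_distrib_left sum_distrib_right mult_ac sum.swap[of _ T])
  also have "\<dots> = (\<Sum>X\<in>T. c X * (X * P) $$ (i, j))"
    using P T ij by (intro sum.cong) (auto simp: scalar_prod_def lessThan_atLeast0)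
  finally show ?thesis .
qed

lemma commute_mat_span:
  assumes P: "P \<in> carrier_mat N N" and Xs: "Xs \<subseteq> carrier_mat N N"
    and commute: "\<And>X. X \<in> Xs \<Longrightarrow> P * X = X * P"
    and Y: "Y \<in> mat_span N Xs"
  shows "P * Y = Y * P"
proof -
  from Y obtain T c where T: "finite T" "T \<subseteq> Xs"
    and Y_def: "Y = mat N N (\<lambda>(i, j). \<Sum>X\<in>T. c X * X $$ (i, j))"
    unfolding mat_span_def by blast
  have "(P * Y) $$ (i, j) = (Y * P) $$ (i, j)" if ij: "i < N" "j < N" for i j
  proof -
    have "(P * Y) $$ (i, j) = (\<Sum>X\<in>T. c X * (P * X) $$ (i, j))"
      unfolding Y_def using P Xs T ij by (intro index_mult_lincomb_left) auto
    also have "\<dots> = (\<Sum>X\<in>T. c X * (X * P) $$ (i, j))"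
      using commute T by (intro sum.cong) auto
    also have "\<dots> = (Y * P) $$ (i, j)"
      unfolding Y_def using P Xs T ij by (intro index_mult_lincomb_right[symmetric]) auto
    finally show ?thesis .
  qed
  then show ?thesis
    using P by (intro eq_matI) (auto simp: Y_def)
qed

lemma commute_all_imp_scalar_mat:
  fixes P :: "'a :: comm_ring_1 mat"
  assumes P: "P \<in> carrier_mat N N"
    and commute: "\<And>Y. Y \<in> carrier_mat N N \<Longrightarrow> P * Y = Y * P"
  shows "P = P $$ (0, 0) \<cdot>\<^sub>m 1\<^sub>m N"
proof -
  define E :: "nat \<Rightarrow> nat \<Rightarrow> 'a mat"
    where "E a b = mat N N (\<lambda>(i, j). if i = a \<and> j = b then 1 else 0)" for a b
  have E_commute: "P $$ (i, a) * (if j = b then 1 else 0) = (if i = a then P $$ (b, j) else 0)"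
    if "i < N" "j < N" "a < N" "b < N" for i j a b
  proof -
    have "(P * E a b) $$ (i, j) = (E a b * P) $$ (i, j)"
      using commute[of "E a b"] by (simp add: E_def)
    moreover have "(P * E a b) $$ (i, j)
        = (\<Sum>k\<in>{0..<N}. P $$ (i, k) * (if k = a \<and> j = b then 1 else 0))"
      using that P by (simp add: E_def scalar_prod_def)
    moreover have "\<dots> = P $$ (i, a) * (if j = b then 1 else 0)"
      using that by (simp add: if_distrib[of "\<lambda>x. _ * x"] cong: if_cong)
    moreover have "(E a b * P) $$ (i, j)
        = (\<Sum>k\<in>{0..<N}. (if i = a \<and> k = b then 1 else 0) * P $$ (k, j))"
      using that P by (simp add: E_def scalar_prod_def)
    moreover have "\<dots> = (if i = a then P $$ (b, j) else 0)"
      using that by (auto simp: if_distrib[of "\<lambda>x. x * _"] cong: if_cong)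
    ultimately show ?thesis
      by simp
  qed
  show ?thesis
  proof (rule eq_matI)
    fix i j
    assume "i < dim_row (P $$ (0, 0) \<cdot>\<^sub>m 1\<^sub>m N)" "j < dim_col (P $$ (0, 0) \<cdot>\<^sub>m 1\<^sub>m N)"
    then have i: "i < N" and j: "j < N"
      by auto
    show "P $$ (i, j) = (P $$ (0, 0) \<cdot>\<^sub>m 1\<^sub>m N) $$ (i, j)"
    proof (cases "i = j")
      case True
      then show ?thesis
        using E_commute[of 0 i 0 i] i by auto
    next
      case False
      then show ?thesis
        using E_commute[of i j j j] i j by auto
    qed
  qed (use P in auto)
qed

lemmas square_mat_mult_simps =
  assoc_mult_mat[of _ n n _ n _ n] mult_carrier_mat[of _ n n _ n] for n

lemma gram_commute_if_adj_similar:
  fixes S Sinv M :: "complex mat"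
  assumes S: "S \<in> carrier_mat N N" "Sinv \<in> carrier_mat N N" "S * Sinv = 1\<^sub>m N" "Sinv * S = 1\<^sub>m N"
    and M: "M \<in> carrier_mat N N"
    and adj_similar: "adj (S * M * Sinv) = S * adj M * Sinv"
  shows "adj S * S * M = M * (adj S * S)"
proof -
  have adj_S_inv: "adj S * adj Sinv = 1\<^sub>m N"
    using S by (metis adj_mult adj_one)
  have "adj S * S * adj M = adj S * S * adj M * (Sinv * S)"
    using S M by simp
  also have "\<dots> = adj S * adj (S * M * Sinv) * S"
    unfolding adj_similar using S(1,2) M by (simp add: square_mat_mult_simps[of _ N])
  also have "\<dots> = adj S * adj Sinv * adj M * (adj S * S)"
    using S(1,2) M by (simp add: adj_mult[of _ N N _ N] square_mat_mult_simps[of _ N])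
  also have "\<dots> = adj M * (adj S * S)"
    using S M by (simp add: adj_S_inv)
  finally have "adj (adj S * S * adj M) = adj (adj M * (adj S * S))"
    by simp
  then show ?thesis
    using S M by (simp add: adj_mult[of _ N N _ N] square_mat_mult_simps[of _ N])
qed

lemma adj_similar_if_unitary:
  fixes S Sinv M :: "complex mat"
  assumes S: "S \<in> carrier_mat N N" "Sinv \<in> carrier_mat N N" "S * Sinv = 1\<^sub>m N" "Sinv * S = 1\<^sub>m N"
    and M: "M \<in> carrier_mat N N" "unitary M"
    and unitary_similar: "unitary (S * M * Sinv)"
  shows "adj (S * M * Sinv) = S * adj M * Sinv"
proof -
  have "S * M * Sinv * (S * adj M * Sinv) = S * M * (Sinv * S) * adj M * Sinv"
    using S(1,2) M(1) by (simp add: square_mat_mult_simps[of _ N])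
  also have "\<dots> = S * (M * adj M) * Sinv"
    using S(1,2) M(1) by (simp add: S(4) square_mat_mult_simps[of _ N])
  also have "\<dots> = 1\<^sub>m N"
    using S M by (simp add: unitary_def)
  finally have right_inv: "S * M * Sinv * (S * adj M * Sinv) = 1\<^sub>m N" .
  have "adj (S * M * Sinv) = adj (S * M * Sinv) * (S * M * Sinv * (S * adj M * Sinv))"
    using S(1,2) M(1) by (simp only: right_inv) (intro right_mult_one_mat[symmetric, of _ N N]; auto)
  also have "\<dots> = adj (S * M * Sinv) * (S * M * Sinv) * (S * adj M * Sinv)"
    using S(1,2) M(1) by (intro assoc_mult_mat[of _ N N _ N _ N, symmetric]) auto
  also have "\<dots> = S * adj M * Sinv"
    using S M(1) unitary_similar by (simp add: unitary_def)
  finally show ?thesis .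
qed

lemma unitary_multiple_if_gram_scalar:
  fixes S Sinv :: "complex mat"
  assumes S: "S \<in> carrier_mat N N" "Sinv \<in> carrier_mat N N" "S * Sinv = 1\<^sub>m N" "Sinv * S = 1\<^sub>m N"
    and gram: "adj S * S = \<kappa> \<cdot>\<^sub>m 1\<^sub>m N"
  shows "\<exists>c. c \<noteq> 0 \<and> unitary (c \<cdot>\<^sub>m S)"
proof (cases "N = 0")
  case True
  then show ?thesis
    using S by (intro exI[of _ 1]) (auto simp: unitary_def)
next
  case False
  define r where "r = (\<Sum>k<N. (cmod (S $$ (k, 0)))\<^sup>2)"
  have gram_scale: "\<kappa> = of_real r"
  proof -
    have "\<kappa> = (adj S * S) $$ (0, 0)"
      using False by (simp add: gram)
    also have "\<dots> = of_real r"
      using S False by (simp add: r_def scalar_prod_def complex_norm_square lessThan_atLeast0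
          mult.commute flip: of_real_power)
    finally show ?thesis .
  qed
  have "r > 0"
  proof (rule ccontr)
    assume "\<not> r > 0"
    then have "r = 0"
      using sum_nonneg[of "{..<N}" "\<lambda>k. (cmod (S $$ (k, 0)))\<^sup>2"] by (simp add: r_def)
    then have "S $$ (k, 0) = 0" if "k < N" for k
      using that by (simp add: r_def sum_nonneg_eq_0_iff)
    then have "(Sinv * S) $$ (0, 0) = 0"
      using S(1,2) False by (auto simp: scalar_prod_def intro!: sum.neutral)
    then show False
      using S(4) False by simp
  qed
  have adj_S: "adj S = \<kappa> \<cdot>\<^sub>m Sinv"
  proof -
    have "adj S = adj S * S * Sinv"
      using S by (simp add: assoc_mult_mat[of _ N N _ N _ N])
    then show ?thesis
      using S by (simp add: gram mult_smult_assoc_mat[of _ N N])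
  qed
  define c where "c = complex_of_real (1 / sqrt r)"
  have c_normalizes: "cnj c * c * \<kappa> = 1"
    using \<open>r > 0\<close> by (simp add: c_def gram_scale field_simps flip: of_real_mult)
  have "(c \<cdot>\<^sub>m S) * adj (c \<cdot>\<^sub>m S) = 1\<^sub>m N" "adj (c \<cdot>\<^sub>m S) * (c \<cdot>\<^sub>m S) = 1\<^sub>m N"
    using S c_normalizes
    by (simp_all add: adj_smult adj_S gram smult_smult_mat mult_smult_distrib[of _ N N]
        mult_smult_assoc_mat[of _ N N] mult_ac)
  moreover have "c \<noteq> 0"
    using \<open>r > 0\<close> by (simp add: c_def)
  ultimately show ?thesis
    using S by (auto simp: unitary_def)
qed

lemma unitary_multiple_if_adj_similar_on_spanning_set:
  fixes S Sinv :: "complex mat"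
  assumes S: "S \<in> carrier_mat N N" "Sinv \<in> carrier_mat N N" "S * Sinv = 1\<^sub>m N" "Sinv * S = 1\<^sub>m N"
    and Xs: "Xs \<subseteq> carrier_mat N N" and span: "mat_span N Xs = carrier_mat N N"
    and adj_similar: "\<And>X. X \<in> Xs \<Longrightarrow> adj (S * X * Sinv) = S * adj X * Sinv"
  shows "\<exists>c. c \<noteq> 0 \<and> unitary (c \<cdot>\<^sub>m S)"
proof -
  have gram_carrier: "adj S * S \<in> carrier_mat N N"
    using S by auto
  have "adj S * S * Y = Y * (adj S * S)" if "Y \<in> carrier_mat N N" for Y
  proof (rule commute_mat_span[OF gram_carrier Xs])
    show "adj S * S * X = X * (adj S * S)" if "X \<in> Xs" for X
      using that Xs adj_similar by (intro gram_commute_if_adj_similar[OF S]) auto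
    show "Y \<in> mat_span N Xs"
      using that span by simp
  qed
  then have "adj S * S = (adj S * S) $$ (0, 0) \<cdot>\<^sub>m 1\<^sub>m N"
    by (intro commute_all_imp_scalar_mat[OF gram_carrier])
  then show ?thesis
    by (rule unitary_multiple_if_gram_scalar[OF S])
qed

theorem proposition25:
  fixes d n N :: nat and \<omega> :: complex and A F :: "complex set"
    and W1 W2 :: "nat \<Rightarrow> nat \<Rightarrow> int"
    and \<tau>1 \<tau>2 :: "(nat \<Rightarrow> int) \<Rightarrow> complex mat"
    and \<mu>1 \<mu>2 :: "gelem \<Rightarrow> complex mat"
    and \<phi> :: "gelem \<Rightarrow> gelem"
    and S Sinv :: "complex mat"
  assumes d_prime: "prime d"
    and \<omega>_prim: "\<omega> ^ d = 1" "\<forall>k. 0 < k \<and> k < d \<longrightarrow> \<omega> ^ k \<noteq> 1"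
    and A_sub: "A \<subseteq> - {0}" "1 \<in> A" "\<forall>a\<in>A. \<forall>b\<in>A. a * b \<in> A" "\<forall>a\<in>A. inverse a \<in> A"
    and \<omega>_A: "\<omega> \<in> A"
    and sqrt_\<omega>: "d = 2 \<longrightarrow> (\<exists>s\<in>A. s ^ 2 = \<omega>)"
    and F_rep: "is_rep_set d \<omega> A F"
    and W1: "W1 \<in> zmats d n" "skew_full_rank d n W1"
    and W2: "W2 \<in> zmats d n" "skew_full_rank d n W2"
    and \<mu>1_hom: "GL_rep N (Ggrp d n \<omega> F W1) \<mu>1"
    and \<mu>1_inj: "inj_on \<mu>1 (carrier (Ggrp d n \<omega> F W1))"
    and \<mu>1_form: "\<forall>a p x. (a, p, x) \<in> carrier (Ggrp d n \<omega> F W1) \<longrightarrow>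
                    \<mu>1 (a, p, x) = (a * \<omega> ^ nat p) \<cdot>\<^sub>m \<tau>1 x"
    and \<mu>2_hom: "GL_rep N (Ggrp d n \<omega> F W2) \<mu>2"
    and \<mu>2_inj: "inj_on \<mu>2 (carrier (Ggrp d n \<omega> F W2))"
    and \<mu>2_form: "\<forall>a p x. (a, p, x) \<in> carrier (Ggrp d n \<omega> F W2) \<longrightarrow>
                    \<mu>2 (a, p, x) = (a * \<omega> ^ nat p) \<cdot>\<^sub>m \<tau>2 x"
    and \<phi>_iso: "\<phi> \<in> iso (Ggrp d n \<omega> F W1) (Ggrp d n \<omega> F W2)"
    and S: "S \<in> carrier_mat N N" "Sinv \<in> carrier_mat N N"
           "S * Sinv = 1\<^sub>m N" "Sinv * S = 1\<^sub>m N"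
    and conj: "\<forall>g\<in>carrier (Ggrp d n \<omega> F W1). \<mu>2 (\<phi> g) = S * \<mu>1 g * Sinv"
  shows "((\<exists>B\<subseteq>carrier (Ggrp d n \<omega> F W1).
              (\<forall>g\<in>B. hermitian (\<mu>1 g)) \<and> mat_span N (\<mu>1 ` B) = carrier_mat N N \<and>
              (\<forall>g\<in>B. hermitian (\<mu>2 (\<phi> g))))
            \<longrightarrow> (\<exists>c::complex. c \<noteq> 0 \<and> unitary (c \<cdot>\<^sub>m S)))
       \<and> ((\<exists>B\<subseteq>carrier (Ggrp d n \<omega> F W1).
              (\<forall>g\<in>B. unitary (\<mu>1 g)) \<and> mat_span N (\<mu>1 ` B) = carrier_mat N N \<and>
              (\<forall>g\<in>B. unitary (\<mu>2 (\<phi> g))))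
            \<longrightarrow> (\<exists>c::complex. c \<noteq> 0 \<and> unitary (c \<cdot>\<^sub>m S)))"
proof -
  let ?G = "Ggrp d n \<omega> F W1"
  have \<mu>1_carrier: "\<mu>1 g \<in> carrier_mat N N" if "g \<in> carrier ?G" for g
    using \<mu>1_hom that unfolding GL_rep_def by blast
  have unitary_multiple: "\<exists>c. c \<noteq> 0 \<and> unitary (c \<cdot>\<^sub>m S)"
    if B: "B \<subseteq> carrier ?G" "mat_span N (\<mu>1 ` B) = carrier_mat N N"
      and adj_similar: "\<And>g. g \<in> B \<Longrightarrow> adj (S * \<mu>1 g * Sinv) = S * adj (\<mu>1 g) * Sinv" for B
    using B \<mu>1_carrier adj_similar by (intro unitary_multiple_if_adj_similar_on_spanning_set[OF S]) auto
  show ?thesis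
  proof (intro conjI impI; elim exE conjE)
    fix B
    assume B: "B \<subseteq> carrier ?G" "mat_span N (\<mu>1 ` B) = carrier_mat N N"
      and hermitian: "\<forall>g\<in>B. hermitian (\<mu>1 g)" "\<forall>g\<in>B. hermitian (\<mu>2 (\<phi> g))"
    show "\<exists>c. c \<noteq> 0 \<and> unitary (c \<cdot>\<^sub>m S)"
      using B(1) hermitian conj unfolding hermitian_def by (intro unitary_multiple[OF B]) (metis subsetD)
  next
    fix B
    assume B: "B \<subseteq> carrier ?G" "mat_span N (\<mu>1 ` B) = carrier_mat N N"
      and unitary: "\<forall>g\<in>B. unitary (\<mu>1 g)" "\<forall>g\<in>B. unitary (\<mu>2 (\<phi> g))"
    show "\<exists>c. c \<noteq> 0 \<and> unitary (c \<cdot>\<^sub>m S)"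
    proof (rule unitary_multiple[OF B])
      fix g
      assume "g \<in> B"
      then have "g \<in> carrier ?G" "unitary (\<mu>1 g)" "unitary (S * \<mu>1 g * Sinv)"
        using B(1) unitary conj by (metis subsetD)+
      then show "adj (S * \<mu>1 g * Sinv) = S * adj (\<mu>1 g) * Sinv"
        using adj_similar_if_unitary[OF S \<mu>1_carrier] by blast
    qed
  qed
qed

end
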